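(* Let $a_1,\dots,a_{m-1},c,b_1,\dots,b_{m-1}\in\mathbb C$ and $\bar u_2=y_1(a_1)\cdots y_{m-1}(a_{m-1})y_m(c)y_{m-1}(b_{m-1})\cdots y_1(b_1)$. Then for every $1\le l\le m-1$, $$r_l(\bar u_2):=\sum_{k=0}^{l}(-1)^k p_{l-k}(\bar u_2)\,p_{2m-1-l+k}(\bar u_2)=(a_1\cdots a_l)^2\,a_{l+1}\cdots a_{m-1}\,c\,b_{m-1}\cdots b_{l+1},$$ and consequently, when all $a_i,c,b_i$ are nonzero, $\dfrac{p_{l+1}p_{2m-1-l}}{r_l}(\bar u_2)$ equals $a_{l+1}+b_{l+1}$ if $l\le m-2$ and equals $c$ if $l=m-1$.
   Context: $m\ge2$. $E_{i,j}$ are the $2m\times2m$ matrix units; $f_i=E_{i+1,i}+E_{2m-i+1,2m-i}$ for $1\le i\le m-1$, $f_m=E_{m+1,m}$, $y_i(a)=\exp(af_i)$. For a $2m\times 2m$ matrix $g$, $p_k(g)=g_{2m,2m-k}$ for $0\le k\le 2m-1$. Empty products equal $1$. *)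

theory Defs
  imports Complex_Main "Jordan_Normal_Form.Matrix"
begin

text \<open>Matrices are 2m x 2m complex matrices of the Jordan_Normal_Form library (0-based
  indices internally); the paper's 1-based indices are translated explicitly.\<close>

definition Eunit :: "nat \<Rightarrow> nat \<Rightarrow> nat \<Rightarrow> complex mat" where
  "Eunit n i j = mat n n (\<lambda>(r, s). if r = i - 1 \<and> s = j - 1 then 1 else 0)"

definition fgen :: "nat \<Rightarrow> nat \<Rightarrow> complex mat" where
  "fgen m i = (if i < m
      then Eunit (2*m) (i+1) i + Eunit (2*m) (2*m - i + 1) (2*m - i)
      else Eunit (2*m) (m+1) m)"

definition mexp :: "complex mat \<Rightarrow> complex mat" where
  "mexp A = mat (dim_row A) (dim_col A) (\<lambda>(i, j). \<Sum>k. (A ^\<^sub>m k) $$ (i, j) / fact k)"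

definition yop :: "nat \<Rightarrow> nat \<Rightarrow> complex \<Rightarrow> complex mat" where
  "yop m i a = mexp (a \<cdot>\<^sub>m fgen m i)"

text \<open>p_k(g) = g_{2m,2m-k} (1-based).\<close>
definition pk :: "nat \<Rightarrow> nat \<Rightarrow> complex mat \<Rightarrow> complex" where
  "pk m k g = g $$ (2*m - 1, 2*m - 1 - k)"

definition mat_prod_list :: "nat \<Rightarrow> complex mat list \<Rightarrow> complex mat" where
  "mat_prod_list n Ms = foldr (*) Ms (1\<^sub>m n)"

definition ubar2 :: "nat \<Rightarrow> (nat \<Rightarrow> complex) \<Rightarrow> complex \<Rightarrow> (nat \<Rightarrow> complex) \<Rightarrow> complex mat" where
  "ubar2 m a c b = mat_prod_list (2*m)
     (map (\<lambda>i. yop m i (a i)) [1..<m] @ [yop m m c] @ map (\<lambda>i. yop m i (b i)) (rev [1..<m]))"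

definition rl :: "nat \<Rightarrow> nat \<Rightarrow> complex mat \<Rightarrow> complex" where
  "rl m l g = (\<Sum>k = 0..l. (-1) ^ k * pk m (l - k) g * pk m (2*m - 1 - l + k) g)"

end

theory Submission
  imports Defs
begin

text \<open>Each y_i(x) is 1 + x f_i with f_i^2 = 0, so multiplying a row vector by y_i(x) only adds
  x times one or two of its entries to their left neighbours (mirrored for i < m). Pushing the last
  unit row through the factors of ubar2 therefore gives the bottom row explicitly:
  p_k = a_1\<cdots>a_k + b_k a_1\<cdots>a_{k-1} for k < m and
  p_k = c a_1\<cdots>a_{m-1} b_{2m-k}\<cdots>b_{m-1} for k \<ge> m.
  With T_j = a_1\<cdots>a_j b_{j+1}\<cdots>b_{m-1}, the product p_j p_{2m-1-j} is
  c a_1\<cdots>a_{m-1} (T_j + T_{j-1}), so the alternating sum r_l telescopes to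
  c a_1\<cdots>a_{m-1} T_l, and the ratio is a direct computation.\<close>

lemma transpose_mult_vec_index:
  assumes "A \<in> carrier_mat n n" "w \<in> carrier_vec n" "s < n"
  shows "(transpose_mat A *\<^sub>v w) $ s = (\<Sum>r<n. A $$ (r, s) * w $ r)"
  using assms by (simp add: scalar_prod_def atLeast0LessThan mult.commute)

lemma index_eq_transpose_mult_unit_vec:
  fixes A :: "'a :: semiring_1 mat"
  assumes "A \<in> carrier_mat n n" "i < n" "j < n"
  shows "A $$ (i, j) = (transpose_mat A *\<^sub>v unit_vec n i) $ j"
  using assms by (simp add: carrier_matD)

lemma mat_prod_list_carrier:
  "\<forall>M\<in>set Ms. M \<in> carrier_mat n n \<Longrightarrow> mat_prod_list n Ms \<in> carrier_mat n n"
  unfolding mat_prod_list_def by (induction Ms) auto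

lemma transpose_mat_prod_list_mult_vec:
  assumes "\<forall>M\<in>set Ms. M \<in> carrier_mat n n" "v \<in> carrier_vec n"
  shows "transpose_mat (mat_prod_list n Ms) *\<^sub>v v = fold (\<lambda>M w. transpose_mat M *\<^sub>v w) Ms v"
  using assms
proof (induction Ms arbitrary: v)
  case Nil
  then show ?case by (simp add: mat_prod_list_def)
next
  case (Cons M Ms)
  have M: "M \<in> carrier_mat n n" and Ms: "\<forall>M\<in>set Ms. M \<in> carrier_mat n n"
    using Cons.prems by auto
  have P: "mat_prod_list n Ms \<in> carrier_mat n n"
    using mat_prod_list_carrier[OF Ms] .
  have "transpose_mat (mat_prod_list n (M # Ms)) *\<^sub>v v
      = (transpose_mat (mat_prod_list n Ms) * transpose_mat M) *\<^sub>v v"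
    by (simp add: mat_prod_list_def transpose_mult[OF M P[unfolded mat_prod_list_def]])
  also have "\<dots> = transpose_mat (mat_prod_list n Ms) *\<^sub>v (transpose_mat M *\<^sub>v v)"
    by (rule assoc_mult_mat_vec) (use M P Cons.prems in auto)
  finally show ?case
    using Cons.IH[OF Ms] M Cons.prems by simp
qed

lemma mexp_square_zero:
  assumes A: "A \<in> carrier_mat n n" and sq: "A * A = 0\<^sub>m n n"
  shows "mexp A = 1\<^sub>m n + A"
proof -
  have pow: "A ^\<^sub>m k = 0\<^sub>m n n" if "k \<ge> 2" for k
    using that
  proof (induction k rule: dec_induct)
    case base
    show ?case using A sq by (simp add: numeral_2_eq_2)
  next
    case (step k)
    then show ?case using A by simp
  qed
  show ?thesis
  proof (rule eq_matI)
    fix r s assume "r < dim_row (1\<^sub>m n + A)" "s < dim_col (1\<^sub>m n + A)"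
    then have rs: "r < n" "s < n" using A by auto
    have "(\<Sum>k. (A ^\<^sub>m k) $$ (r,s) / fact k) = (\<Sum>k\<in>{0,1}. (A ^\<^sub>m k) $$ (r,s) / fact k)"
      by (rule suminf_finite) (use pow rs in auto)
    then show "mexp A $$ (r,s) = (1\<^sub>m n + A) $$ (r,s)"
      unfolding mexp_def using A rs by simp
  qed (use A in \<open>auto simp: mexp_def\<close>)
qed

lemma Eunit_mult_Eunit:
  assumes "1 \<le> j" "j \<le> n" "1 \<le> k"
  shows "Eunit n i j * Eunit n k l = (if j = k then Eunit n i l else 0\<^sub>m n n)"
proof (rule eq_matI)
  fix r s assume rs: "r < dim_row (if j = k then Eunit n i l else 0\<^sub>m n n)"
    "s < dim_col (if j = k then Eunit n i l else 0\<^sub>m n n)"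
  then have "r < n" "s < n" by (auto simp: Eunit_def split: if_splits)
  then show "(Eunit n i j * Eunit n k l) $$ (r, s) = (if j = k then Eunit n i l else 0\<^sub>m n n) $$ (r, s)"
    using assms by (auto simp: Eunit_def scalar_prod_def if_distrib[of "\<lambda>x. x * _"] cong: if_cong)
qed (auto simp: Eunit_def)

lemma sum_Eunit_column:
  assumes "1 \<le> p" "p \<le> n" "s < n"
  shows "(\<Sum>r<n. Eunit n p q $$ (r, s) * w r) = (if s = q - 1 then w (p - 1) else 0)"
proof -
  have "(\<Sum>r<n. Eunit n p q $$ (r, s) * w r) = (\<Sum>r<n. if r = p - 1 then (if s = q - 1 then w r else 0) else 0)"
    by (rule sum.cong) (use assms in \<open>auto simp: Eunit_def\<close>)
  then show ?thesis using assms by simp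
qed

lemma fgen_carrier[simp]: "fgen m i \<in> carrier_mat (2*m) (2*m)"
  by (simp add: fgen_def Eunit_def)

lemma fgen_dim[simp]: "dim_row (fgen m i) = 2*m" "dim_col (fgen m i) = 2*m"
  using fgen_carrier by blast+

lemma fgen_square:
  assumes "1 \<le> i" "i \<le> m"
  shows "fgen m i * fgen m i = 0\<^sub>m (2*m) (2*m)"
proof (cases "i < m")
  case True
  define A where "A = Eunit (2*m) (i+1) i"
  define B where "B = Eunit (2*m) (2*m - i + 1) (2*m - i)"
  have AB: "A \<in> carrier_mat (2*m) (2*m)" "B \<in> carrier_mat (2*m) (2*m)"
    by (simp_all add: A_def B_def Eunit_def)
  have "i \<noteq> 2*m - i + 1" "2*m - i \<noteq> i + 1" using True by presburger+
  then have "A * A = 0\<^sub>m (2*m) (2*m)" "A * B = 0\<^sub>m (2*m) (2*m)"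
    "B * A = 0\<^sub>m (2*m) (2*m)" "B * B = 0\<^sub>m (2*m) (2*m)"
    using True assms by (simp_all add: A_def B_def Eunit_mult_Eunit)
  moreover have "fgen m i = A + B"
    using True by (simp add: fgen_def A_def B_def)
  moreover have "(A + B) * (A + B) = A * A + B * A + (A * B + B * B)"
    using AB by (simp add: add_mult_distrib_mat[of _ "2*m" "2*m"] mult_add_distrib_mat[of _ "2*m" "2*m"])
  ultimately show ?thesis by simp
next
  case False
  then show ?thesis using assms by (simp add: fgen_def Eunit_mult_Eunit)
qed

lemma yop_eq_one_plus:
  assumes "1 \<le> i" "i \<le> m"
  shows "yop m i x = 1\<^sub>m (2*m) + x \<cdot>\<^sub>m fgen m i"
proof -
  have "(x \<cdot>\<^sub>m fgen m i) * (x \<cdot>\<^sub>m fgen m i) = 0\<^sub>m (2*m) (2*m)"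
    using fgen_square[OF assms]
    by (simp add: mult_smult_assoc_mat[OF fgen_carrier smult_carrier_mat[OF fgen_carrier]]
        mult_smult_distrib[OF fgen_carrier fgen_carrier])
  then show ?thesis unfolding yop_def by (simp add: mexp_square_zero)
qed

lemma yop_carrier[simp]: "yop m i x \<in> carrier_mat (2*m) (2*m)"
  by (simp add: yop_def mexp_def)

lemma fgen_column_sum:
  assumes "1 \<le> i" "i \<le> m" "s < 2*m"
  shows "(\<Sum>r<2*m. fgen m i $$ (r, s) * w r) =
    (if i < m then (if s = i - 1 then w i else 0) + (if s = 2*m - i - 1 then w (2*m - i) else 0)
     else if s = m - 1 then w m else 0)"
proof (cases "i < m")
  case True
  have "(\<Sum>r<2*m. fgen m i $$ (r, s) * w r) =
      (\<Sum>r<2*m. Eunit (2*m) (i+1) i $$ (r, s) * w r) +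
      (\<Sum>r<2*m. Eunit (2*m) (2*m - i + 1) (2*m - i) $$ (r, s) * w r)"
    unfolding sum.distrib[symmetric]
    by (rule sum.cong) (use True assms in \<open>auto simp: fgen_def Eunit_def distrib_right\<close>)
  then show ?thesis using True assms by (simp add: sum_Eunit_column)
next
  case False
  then show ?thesis using assms by (simp add: fgen_def sum_Eunit_column)
qed

lemma transpose_yop_mult_vec:
  assumes "1 \<le> i" "i \<le> m" "w \<in> carrier_vec (2*m)" "s < 2*m"
  shows "(transpose_mat (yop m i x) *\<^sub>v w) $ s = w $ s + x *
    (if i < m then (if s = i - 1 then w $ i else 0) + (if s = 2*m - i - 1 then w $ (2*m - i) else 0)
     else if s = m - 1 then w $ m else 0)"
proof -
  have "(transpose_mat (yop m i x) *\<^sub>v w) $ s = (\<Sum>r<2*m. yop m i x $$ (r, s) * w $ r)"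
    using assms by (simp add: transpose_mult_vec_index)
  also have "\<dots> = (\<Sum>r<2*m. (if r = s then w $ r else 0) + x * (fgen m i $$ (r, s) * w $ r))"
    by (rule sum.cong) (use assms in \<open>auto simp: yop_eq_one_plus distrib_right\<close>)
  also have "\<dots> = w $ s + x * (\<Sum>r<2*m. fgen m i $$ (r, s) * w $ r)"
    using assms by (simp add: sum.distrib sum_distrib_left)
  finally show ?thesis using fgen_column_sum[OF assms(1,2,4), of "\<lambda>r. w $ r"] by simp
qed

text \<open>Entry s of these vectors is p_{2m-1-s} of a partial product of ubar2: row_after_a m a k is
  the bottom row of y_1(a_1)\<cdots>y_k(a_k), and row_after_b m a c b j that of
  y_1(a_1)\<cdots>y_{m-1}(a_{m-1}) y_m(c) y_{m-1}(b_{m-1})\<cdots>y_{j+1}(b_{j+1}).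
  A row vector w times M is computed as transpose_mat M times w.\<close>

definition row_after_a :: "nat \<Rightarrow> (nat \<Rightarrow> complex) \<Rightarrow> nat \<Rightarrow> complex vec" where
  "row_after_a m a k = vec (2*m) (\<lambda>s. if 2*m - 1 - k \<le> s then (\<Prod>i = 1..2*m - 1 - s. a i) else 0)"

lemma row_after_a_Suc:
  assumes "Suc k \<le> m - 1"
  shows "transpose_mat (yop m (Suc k) (a (Suc k))) *\<^sub>v row_after_a m a k = row_after_a m a (Suc k)"
proof (rule eq_vecI)
  fix s assume "s < dim_vec (row_after_a m a (Suc k))"
  then have s: "s < 2*m" by (simp add: row_after_a_def)
  show "(transpose_mat (yop m (Suc k) (a (Suc k))) *\<^sub>v row_after_a m a k) $ s = row_after_a m a (Suc k) $ s"
  proof (cases "s = 2*m - k - 2")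
    case True
    then have "2*m - 1 - s = Suc k" "2*m - 1 - (2*m - Suc k) = k" using assms by auto
    then show ?thesis using True assms s
      by (auto simp: transpose_yop_mult_vec row_after_a_def prod.nat_ivl_Suc')
  next
    case False
    then show ?thesis using assms s
      by (auto simp: transpose_yop_mult_vec row_after_a_def)
  qed
qed (simp add: row_after_a_def carrier_matD[OF yop_carrier])

lemma fold_yop_a:
  assumes "k \<le> m - 1"
  shows "fold (\<lambda>i w. transpose_mat (yop m i (a i)) *\<^sub>v w) [1..<Suc k] (unit_vec (2*m) (2*m - 1))
    = row_after_a m a k"
  using assms
proof (induction k)
  case 0
  show ?case by (rule eq_vecI) (auto simp: row_after_a_def)
next
  case (Suc k)
  then show ?case using row_after_a_Suc[OF Suc.prems] by simp
qed

definition row_after_b :: "nat \<Rightarrow> (nat \<Rightarrow> complex) \<Rightarrow> complex \<Rightarrow> (nat \<Rightarrow> complex) \<Rightarrow> nat \<Rightarrow> complex vec" where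
  "row_after_b m a c b j = vec (2*m) (\<lambda>s.
     if m \<le> s then (\<Prod>i = 1..2*m - 1 - s. a i)
       + (if j < 2*m - 1 - s then b (2*m - 1 - s) * (\<Prod>i = 1..2*m - 2 - s. a i) else 0)
     else if j \<le> s then c * (\<Prod>i = 1..m - 1. a i) * (\<Prod>i = Suc s..m - 1. b i) else 0)"

lemma row_after_a_yop_c:
  assumes "m \<ge> 2"
  shows "transpose_mat (yop m m c) *\<^sub>v row_after_a m a (m - 1) = row_after_b m a c b (m - 1)"
proof (rule eq_vecI)
  fix s assume "s < dim_vec (row_after_b m a c b (m - 1))"
  then have s: "s < 2*m" by (simp add: row_after_b_def)
  show "(transpose_mat (yop m m c) *\<^sub>v row_after_a m a (m - 1)) $ s = row_after_b m a c b (m - 1) $ s"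
  proof (cases "s = m - 1")
    case True
    then have "2*m - 1 - m = m - 1" by auto
    then show ?thesis using True assms s
      by (auto simp: transpose_yop_mult_vec row_after_a_def row_after_b_def)
  next
    case False
    then show ?thesis using assms s
      by (auto simp: transpose_yop_mult_vec row_after_a_def row_after_b_def)
  qed
qed (simp add: row_after_b_def carrier_matD[OF yop_carrier])

lemma row_after_b_yop:
  assumes "Suc j < m"
  shows "transpose_mat (yop m (Suc j) (b (Suc j))) *\<^sub>v row_after_b m a c b (Suc j) = row_after_b m a c b j"
proof (rule eq_vecI)
  fix s assume "s < dim_vec (row_after_b m a c b j)"
  then have s: "s < 2*m" by (simp add: row_after_b_def)
  show "(transpose_mat (yop m (Suc j) (b (Suc j))) *\<^sub>v row_after_b m a c b (Suc j)) $ s = row_after_b m a c b j $ s"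
  proof (cases "s = j")
    case True
    have "(\<Prod>i = Suc j..m - 1. b i) = b (Suc j) * (\<Prod>i = Suc (Suc j)..m - 1. b i)"
      using assms by (simp add: prod.atLeast_Suc_atMost)
    then show ?thesis using True assms s by (auto simp: transpose_yop_mult_vec row_after_b_def)
  next
    case False
    show ?thesis
    proof (cases "s = 2*m - j - 2")
      case True
      then have "2*m - 1 - s = Suc j" "2*m - 2 - s = j" "2*m - 1 - (2*m - Suc j) = j"
        "2*m - Suc j - 1 = s" "m \<le> s" using assms by auto
      then show ?thesis using True False assms s
        by (auto simp: transpose_yop_mult_vec row_after_b_def prod.nat_ivl_Suc')
    next
      case False2: False
      show ?thesis using False False2 assms s
        by (auto simp: transpose_yop_mult_vec row_after_b_def)
    qed
  qed
qed (simp add: row_after_b_def carrier_matD[OF yop_carrier])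

lemma fold_yop_b:
  assumes "j \<le> m - 1"
  shows "fold (\<lambda>i w. transpose_mat (yop m i (b i)) *\<^sub>v w) (rev [Suc j..<m]) (row_after_b m a c b (m - 1))
    = row_after_b m a c b j"
  using assms
proof (induction j rule: inc_induct)
  case base
  show ?case by simp
next
  case (step j)
  then have "rev [Suc j..<m] = rev [Suc (Suc j)..<m] @ [Suc j]"
    by (simp add: upt_conv_Cons)
  then show ?case using step.IH row_after_b_yop[of j m] step.hyps by simp
qed

lemma ubar2_bottom_row:
  assumes "m \<ge> 2" "s < 2*m"
  shows "ubar2 m a c b $$ (2*m - 1, s) = row_after_b m a c b 0 $ s"
proof -
  let ?act = "\<lambda>M w. transpose_mat M *\<^sub>v w"
  define Ms where "Ms = map (\<lambda>i. yop m i (a i)) [1..<m] @ [yop m m c] @ map (\<lambda>i. yop m i (b i)) (rev [1..<m])"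
  have Ms: "\<forall>M\<in>set Ms. M \<in> carrier_mat (2*m) (2*m)" by (auto simp: Ms_def)
  have "fold ?act (map (\<lambda>i. yop m i (a i)) [1..<m]) (unit_vec (2*m) (2*m - 1)) = row_after_a m a (m - 1)"
    using fold_yop_a[of "m - 1" m a] assms by (simp add: fold_map comp_def)
  moreover have "fold ?act (map (\<lambda>i. yop m i (b i)) (rev [1..<m])) (row_after_b m a c b (m - 1))
      = row_after_b m a c b 0"
    using fold_yop_b[of 0 m b a c] by (simp add: fold_map comp_def)
  ultimately have "fold ?act Ms (unit_vec (2*m) (2*m - 1)) = row_after_b m a c b 0"
    using row_after_a_yop_c[OF assms(1)] by (simp add: Ms_def)
  moreover have "ubar2 m a c b = mat_prod_list (2*m) Ms"
    by (simp add: ubar2_def Ms_def)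
  ultimately show ?thesis
    using assms index_eq_transpose_mult_unit_vec[OF mat_prod_list_carrier[OF Ms], of "2*m - 1" s]
    by (simp add: transpose_mat_prod_list_mult_vec[OF Ms])
qed

lemma pk_ubar2_low:
  assumes "m \<ge> 2" "k \<le> m - 1"
  shows "pk m k (ubar2 m a c b) =
    (\<Prod>i = 1..k. a i) + (if 1 \<le> k then b k * (\<Prod>i = 1..k - 1. a i) else 0)"
proof -
  have "pk m k (ubar2 m a c b) = row_after_b m a c b 0 $ (2*m - 1 - k)"
    unfolding pk_def using assms by (intro ubar2_bottom_row) auto
  moreover have "2*m - 1 - (2*m - 1 - k) = k" "2*m - 2 - (2*m - 1 - k) = k - 1"
    using assms by auto
  ultimately show ?thesis using assms by (auto simp: row_after_b_def)
qed

lemma pk_ubar2_high: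
  assumes "m \<ge> 2" "m \<le> k" "k \<le> 2*m - 1"
  shows "pk m k (ubar2 m a c b) = c * (\<Prod>i = 1..m - 1. a i) * (\<Prod>i = 2*m - k..m - 1. b i)"
proof -
  have "pk m k (ubar2 m a c b) = row_after_b m a c b 0 $ (2*m - 1 - k)"
    unfolding pk_def using assms by (intro ubar2_bottom_row) auto
  moreover have "Suc (2*m - 1 - k) = 2*m - k" using assms by auto
  ultimately show ?thesis using assms by (auto simp: row_after_b_def)
qed

lemma alternating_sum_telescope:
  fixes T :: "nat \<Rightarrow> 'a :: comm_ring_1"
  shows "(\<Sum>k = 0..l. (-1) ^ k * (T (l - k) + (if k < l then T (l - Suc k) else 0))) = T l"
proof (induction l)
  case 0
  show ?case by simp
next
  case (Suc l)
  have "(\<Sum>k = 0..l. (-1) ^ Suc k * (T (Suc l - Suc k) + (if Suc k < Suc l then T (Suc l - Suc (Suc k)) else 0)))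
      = - (\<Sum>k = 0..l. (-1) ^ k * (T (l - k) + (if k < l then T (l - Suc k) else 0)))"
    unfolding sum_negf[symmetric] by (rule sum.cong) auto
  then show ?case using Suc.IH by (subst sum.atLeast0_atMost_Suc_shift) simp
qed

lemma pk_ubar2_mult_complement:
  assumes "m \<ge> 2" "j \<le> m - 1"
  shows "pk m j (ubar2 m a c b) * pk m (2*m - 1 - j) (ubar2 m a c b) =
    c * (\<Prod>i = 1..m - 1. a i) * ((\<Prod>i = 1..j. a i) * (\<Prod>i = Suc j..m - 1. b i)
      + (if 1 \<le> j then (\<Prod>i = 1..j - 1. a i) * (\<Prod>i = j..m - 1. b i) else 0))"
proof -
  have high: "pk m (2*m - 1 - j) (ubar2 m a c b) = c * (\<Prod>i = 1..m - 1. a i) * (\<Prod>i = Suc j..m - 1. b i)"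
    using pk_ubar2_high[of m "2*m - 1 - j"] assms by (simp add: Suc_diff_Suc)
  have "(\<Prod>i = j..m - 1. b i) = b j * (\<Prod>i = Suc j..m - 1. b i)" if "1 \<le> j"
    using assms that by (simp add: prod.atLeast_Suc_atMost)
  then show ?thesis using pk_ubar2_low[OF assms] high by (simp add: algebra_simps)
qed

lemma rl_ubar2:
  assumes "m \<ge> 2" "l \<le> m - 1"
  shows "rl m l (ubar2 m a c b) =
    c * (\<Prod>i = 1..m - 1. a i) * ((\<Prod>i = 1..l. a i) * (\<Prod>i = Suc l..m - 1. b i))"
proof -
  define T where "T j = (\<Prod>i = 1..j. a i) * (\<Prod>i = Suc j..m - 1. b i)" for j
  have "rl m l (ubar2 m a c b)
      = (\<Sum>k = 0..l. c * (\<Prod>i = 1..m - 1. a i) * ((-1) ^ k * (T (l - k) + (if k < l then T (l - Suc k) else 0))))"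
    unfolding rl_def
  proof (rule sum.cong)
    fix k assume "k \<in> {0..l}"
    then have "2*m - 1 - l + k = 2*m - 1 - (l - k)" "l - k \<le> m - 1" "Suc (l - Suc k) = l - k \<or> k = l"
      using assms by auto
    then show "(-1) ^ k * pk m (l - k) (ubar2 m a c b) * pk m (2*m - 1 - l + k) (ubar2 m a c b)
        = c * (\<Prod>i = 1..m - 1. a i) * ((-1) ^ k * (T (l - k) + (if k < l then T (l - Suc k) else 0)))"
      using pk_ubar2_mult_complement[OF assms(1), of "l - k" a c b] by (auto simp: T_def algebra_simps)
  qed simp
  also have "\<dots> = c * (\<Prod>i = 1..m - 1. a i) * T l"
    by (simp add: sum_distrib_left[symmetric] alternating_sum_telescope)
  finally show ?thesis by (simp add: T_def)
qed

lemma pk_ratio_ubar2: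
  assumes "m \<ge> 2" "l \<le> m - 1" and nonzero: "\<forall>i \<in> {1..m-1}. a i \<noteq> 0 \<and> b i \<noteq> 0" "c \<noteq> 0"
  shows "pk m (l+1) (ubar2 m a c b) * pk m (2*m - 1 - l) (ubar2 m a c b) / rl m l (ubar2 m a c b)
    = (if l \<le> m - 2 then a (l+1) + b (l+1) else c)"
proof -
  let ?A = "\<lambda>j. \<Prod>i = 1..j. a i" and ?D = "\<Prod>i = Suc l..m - 1. b i"
  have nz: "?A l \<noteq> 0" "?A (m - 1) \<noteq> 0" "?D \<noteq> 0"
    using nonzero assms(2) by (auto simp: prod_zero_iff)
  have high: "pk m (2*m - 1 - l) (ubar2 m a c b) = c * ?A (m - 1) * ?D"
    using pk_ubar2_high[of m "2*m - 1 - l"] assms by (simp add: Suc_diff_Suc)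
  show ?thesis
  proof (cases "l \<le> m - 2")
    case True
    then have "pk m (l+1) (ubar2 m a c b) = ?A l * (a (l+1) + b (l+1))"
      using pk_ubar2_low[of m "l+1"] assms by (simp add: prod.nat_ivl_Suc' algebra_simps)
    then show ?thesis using True nz high rl_ubar2[OF assms(1,2)] \<open>c \<noteq> 0\<close> by (simp add: field_simps)
  next
    case False
    then have "l + 1 = m" "m - 1 = l" "2*m - 1 - l = m" "?D = 1" using assms by auto
    then show ?thesis using False nz high rl_ubar2[OF assms(1,2)] \<open>c \<noteq> 0\<close>
      by (simp add: field_simps power2_eq_square)
  qed
qed

theorem mainTheorem7:
  fixes m l :: nat and a b :: "nat \<Rightarrow> complex" and c :: complex
  assumes "m \<ge> 2" and "1 \<le> l" and "l \<le> m - 1"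
  shows "rl m l (ubar2 m a c b) =
           (\<Prod>i = 1..l. a i) ^ 2 * (\<Prod>i = l+1..m-1. a i) * c * (\<Prod>i = l+1..m-1. b i)
       \<and> ((\<forall>i \<in> {1..m-1}. a i \<noteq> 0 \<and> b i \<noteq> 0) \<and> c \<noteq> 0 \<longrightarrow>
           pk m (l+1) (ubar2 m a c b) * pk m (2*m - 1 - l) (ubar2 m a c b) / rl m l (ubar2 m a c b)
             = (if l \<le> m - 2 then a (l+1) + b (l+1) else c))"
proof
  have "(\<Prod>i = 1..m - 1. a i) = (\<Prod>i = 1..l. a i) * (\<Prod>i = l+1..m-1. a i)"
    using prod.ub_add_nat[of 1 l a "m - 1 - l"] assms by simp
  then show "rl m l (ubar2 m a c b) =
      (\<Prod>i = 1..l. a i) ^ 2 * (\<Prod>i = l+1..m-1. a i) * c * (\<Prod>i = l+1..m-1. b i)"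
    using rl_ubar2[OF assms(1,3)] by (simp add: power2_eq_square algebra_simps)
qed (use pk_ratio_ubar2 assms in blast)

end
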